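(* For every object $(G,\hat q,f)$ of $\mathsf{PSM}$, the kernel of the group homomorphism $F:\mathrm{Aut}_{\mathsf{PSM}}(G,\hat q,f)\to\mathrm{Aut}_{\mathsf{ASCS}}(F(G,\hat q,f))$ is isomorphic to $\mathbb{Z}_2$.
   Context: A quadratic form on a finite abelian group $G$ is a map $q:G\to\mathbb{Q}/\mathbb{Z}$ such that $b(x,y):=q(x+y)-q(x)-q(y)+q(0)$ is bilinear; non-degenerate if $b$ is; homogeneous if $q(nx)=n^2q(x)$ for $n\in\mathbb{Z}$. $q\sim q'$ if there is $\Delta\in G$ with $q(g)=q'(g-\Delta)$ for all $g$; $[q]$ is the class. Gauss sum: $\tau^+(G,q)=|G|^{-1/2}\sum_{g\in G}e^{2\pi i q(g)}$. $\mathsf{ASCS}$: objects $(\mathscr{D},[q],\sigma)$ with $\mathscr{D}$ finite abelian, $[q]$ a class of non-degenerate quadratic forms on $\mathscr{D}$ with no representative satisfying $q(0)=0$, $\sigma\in\mathbb{Z}_8$, and $\tau^+(\mathscr{D},q)=e^{2\pi i\sigma/8}$; morphisms are group isomorphisms $\phi$ with $[q_2\circ\phi]=[q_1]$. $\mathsf{PSM}$: objects $(G,\hat q,f)$ with $G$ finite abelian, $\hat q$ a non-degenerate homogeneous quadratic form, $f\in G$ with $2f=0$, $\hat q(f)=\tfrac12$; morphisms are group isomorphisms $\phi$ with $\hat q_2\circ\phi=\hat q_1$, $\phi(f_1)=f_2$. Functor $F$: for $(G,\hat q,f)$ with bilinear form $\hat b$, $G_0=\{g:\hat b(g,f)=0\}$,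 $\mathscr{D}=G_0/\langle f\rangle$, $a\in G\setminus G_0$, $q_a([x])=\hat q(x-a)$ for $x\in G_0$, $\sigma\in\mathbb{Z}_8$ with $\tau^+(G,\hat q)=e^{2\pi i\sigma/8}$; $F(G,\hat q,f)=(\mathscr{D},[q_a],\sigma)$ and $F(\phi)$ is the isomorphism induced on $G_0/\langle f\rangle$. *)

theory Defs
  imports Complex_Main "HOL-Algebra.Elementary_Groups"
begin

text \<open>Values in Q/Z are represented by rationals, compared modulo the integers.\<close>

definition qz_eq :: "rat \<Rightarrow> rat \<Rightarrow> bool" where
  "qz_eq a b \<longleftrightarrow> a - b \<in> \<int>"

definition zmult :: "int \<Rightarrow> 'a::ab_group_add \<Rightarrow> 'a" where
  "zmult n x = (if 0 \<le> n then (((+) x) ^^ nat n) 0 else - ((((+) x) ^^ nat (- n)) 0))"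

definition assoc_bil :: "('a::ab_group_add \<Rightarrow> rat) \<Rightarrow> 'a \<Rightarrow> 'a \<Rightarrow> rat" where
  "assoc_bil q x y = q (x + y) - q x - q y + q 0"

definition is_quadratic_form :: "('a::ab_group_add \<Rightarrow> rat) \<Rightarrow> bool" where
  "is_quadratic_form q \<longleftrightarrow>
     (\<forall>x x' y. qz_eq (assoc_bil q (x + x') y) (assoc_bil q x y + assoc_bil q x' y)) \<and>
     (\<forall>x y y'. qz_eq (assoc_bil q x (y + y')) (assoc_bil q x y + assoc_bil q x y'))"

definition nondegenerate :: "('a::ab_group_add \<Rightarrow> rat) \<Rightarrow> bool" where
  "nondegenerate q \<longleftrightarrow> (\<forall>x. (\<forall>y. qz_eq (assoc_bil q x y) 0) \<longrightarrow> x = 0)"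

definition homogeneous :: "('a::ab_group_add \<Rightarrow> rat) \<Rightarrow> bool" where
  "homogeneous q \<longleftrightarrow> (\<forall>(n::int) x. qz_eq (q (zmult n x)) (of_int (n^2) * q x))"

definition PSM_obj :: "('a::{ab_group_add,finite} \<Rightarrow> rat) \<Rightarrow> 'a \<Rightarrow> bool" where
  "PSM_obj q f \<longleftrightarrow> is_quadratic_form q \<and> nondegenerate q \<and> homogeneous q \<and>
     f + f = 0 \<and> qz_eq (q f) (1/2)"

definition PSM_aut :: "('a::ab_group_add \<Rightarrow> rat) \<Rightarrow> 'a \<Rightarrow> ('a \<Rightarrow> 'a) set" where
  "PSM_aut q f = {\<phi>. bij \<phi> \<and> (\<forall>x y. \<phi> (x + y) = \<phi> x + \<phi> y) \<and>
                       (\<forall>x. qz_eq (q (\<phi> x)) (q x)) \<and> \<phi> f = f}"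

text \<open>G_0 and D = G_0 / <f>, elements of D being cosets of <f> = {0, f}.\<close>
definition G0 :: "('a::ab_group_add \<Rightarrow> rat) \<Rightarrow> 'a \<Rightarrow> 'a set" where
  "G0 q f = {g. qz_eq (assoc_bil q g f) 0}"

definition Dgrp :: "('a::ab_group_add \<Rightarrow> rat) \<Rightarrow> 'a \<Rightarrow> 'a set set" where
  "Dgrp q f = {(\<lambda>y. x + y) ` {0, f} | x. x \<in> G0 q f}"

text \<open>F on morphisms: the isomorphism induced on G_0/<f>.\<close>
definition F_mor :: "('a \<Rightarrow> 'a) \<Rightarrow> 'a set \<Rightarrow> 'a set" where
  "F_mor \<phi> C = \<phi> ` C"

definition F_kernel :: "('a::ab_group_add \<Rightarrow> rat) \<Rightarrow> 'a \<Rightarrow> ('a \<Rightarrow> 'a) set" where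
  "F_kernel q f = {\<phi> \<in> PSM_aut q f. \<forall>C \<in> Dgrp q f. F_mor \<phi> C = C}"

definition F_kernel_group :: "('a::ab_group_add \<Rightarrow> rat) \<Rightarrow> 'a \<Rightarrow> ('a \<Rightarrow> 'a) monoid" where
  "F_kernel_group q f = \<lparr>carrier = F_kernel q f, mult = (\<circ>), one = id\<rparr>"

end

theory Submission
  imports Defs
begin

text \<open>
  Since 2f = 0, the character x \<mapsto> b(x, f) takes values in {0, 1/2}, so G_0 has index two in G,
  and by nondegeneracy the only elements orthogonal to G_0 are 0 and f.
  An automorphism \<phi> in the kernel maps each coset {x, x + f} of D to itself; as
  q(x + f) = q(x) + 1/2 on G_0, it fixes G_0 pointwise. Then \<phi>(y) - y is the same element d for
  all y outside G_0, and d is orthogonal to G_0, so d = 0 or d = f. Both choices occur: they give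
  the identity and the involution adding f exactly off G_0.
\<close>

lemma qz_eq_refl [simp]: "qz_eq a a"
  by (simp add: qz_eq_def)

lemma qz_eq_sym: "qz_eq a b \<Longrightarrow> qz_eq b a"
  unfolding qz_eq_def by (metis Ints_minus minus_diff_eq)

lemma qz_eq_trans [trans]: "qz_eq a b \<Longrightarrow> qz_eq b c \<Longrightarrow> qz_eq a c"
  unfolding qz_eq_def using Ints_add[of "a - b" "b - c"] by simp

lemma qz_eq_add: "qz_eq a b \<Longrightarrow> qz_eq c d \<Longrightarrow> qz_eq (a + c) (b + d)"
  unfolding qz_eq_def using Ints_add[of "a - b" "c - d"] by (simp add: add_diff_add)

lemma qz_eq_diff: "qz_eq a b \<Longrightarrow> qz_eq c d \<Longrightarrow> qz_eq (a - c) (b - d)"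
  unfolding qz_eq_def using Ints_diff[of "a - b" "c - d"] by (simp add: algebra_simps)

lemma qz_eq_left_cong: "qz_eq a b \<Longrightarrow> qz_eq a c \<longleftrightarrow> qz_eq b c"
  using qz_eq_sym qz_eq_trans by metis

lemma qz_eq_add_self_iff: "qz_eq (a + b) a \<longleftrightarrow> qz_eq b 0"
  by (simp add: qz_eq_def)

lemma half_notin_Ints [simp]: "(1/2 :: rat) \<notin> \<int>"
proof
  assume "(1/2 :: rat) \<in> \<int>"
  then obtain k :: int where "(1/2 :: rat) = of_int k"
    by (auto elim: Ints_cases)
  then have "(1 :: int) = 2 * k"
    by (simp add: field_simps flip: of_int_eq_iff)
  then show False
    by presburger
qed

lemma qz_eq_double_zeroD:
  assumes "qz_eq (t + t) 0"
  shows "qz_eq t 0 \<or> qz_eq (t :: rat) (1/2)"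
proof -
  obtain k :: int where k: "t + t = of_int k"
    using assms unfolding qz_eq_def by (auto elim: Ints_cases)
  show ?thesis
  proof (cases "even k")
    case True
    then obtain m where "k = 2 * m" by blast
    with k have "t = of_int m" by simp
    then show ?thesis unfolding qz_eq_def by simp
  next
    case False
    then obtain m where "k = 2 * m + 1" using oddE by blast
    with k have "t - 1/2 = of_int m" by simp
    then show ?thesis unfolding qz_eq_def by (metis Ints_of_int)
  qed
qed

lemma assoc_bil_commute: "assoc_bil q x y = assoc_bil q y x"
  unfolding assoc_bil_def by (simp add: add.commute)

lemma assoc_bil_zero_left [simp]: "assoc_bil q 0 y = 0"
  unfolding assoc_bil_def by simp

lemma q_add_eq: "q (x + y) = q x + q y + assoc_bil q x y - q 0"
  unfolding assoc_bil_def by simp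

lemma assoc_bil_add_left:
  "is_quadratic_form q \<Longrightarrow> qz_eq (assoc_bil q (x + x') y) (assoc_bil q x y + assoc_bil q x' y)"
  unfolding is_quadratic_form_def by blast

lemma assoc_bil_add_right:
  "is_quadratic_form q \<Longrightarrow> qz_eq (assoc_bil q x (y + y')) (assoc_bil q x y + assoc_bil q x y')"
  unfolding is_quadratic_form_def by blast

lemma homogeneous_q_zero:
  assumes "homogeneous q"
  shows "qz_eq (q 0) 0"
proof -
  have "qz_eq (q (zmult 0 0)) (of_int (0^2) * q 0)"
    using assms unfolding homogeneous_def by blast
  then show ?thesis
    by (simp add: zmult_def)
qed

lemma assoc_bil_preserved:
  assumes "\<And>x y. \<phi> (x + y) = \<phi> x + \<phi> y" and "\<And>x. qz_eq (q (\<phi> x)) (q x)"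
  shows "qz_eq (assoc_bil q (\<phi> x) (\<phi> y)) (assoc_bil q x y)"
proof -
  have "\<phi> 0 = 0"
    using assms(1)[of 0 0] by simp
  moreover have "qz_eq (q (\<phi> (x + y)) - q (\<phi> x) - q (\<phi> y) + q (\<phi> 0)) (q (x + y) - q x - q y + q 0)"
    by (intro qz_eq_add qz_eq_diff assms(2))
  ultimately show ?thesis
    unfolding assoc_bil_def assms(1) by simp
qed

lemma zero_in_G0: "0 \<in> G0 q f"
  by (simp add: G0_def)

lemma id_in_F_kernel: "id \<in> F_kernel q f"
  unfolding F_kernel_def PSM_aut_def F_mor_def by simp

definition twist :: "('a::ab_group_add \<Rightarrow> rat) \<Rightarrow> 'a \<Rightarrow> 'a \<Rightarrow> 'a" where
  "twist q f x = (if x \<in> G0 q f then x else x + f)"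

locale psm_object =
  fixes q :: "'a::{ab_group_add,finite} \<Rightarrow> rat" and f :: 'a
  assumes psm_obj: "PSM_obj q f"
begin

lemma quadratic: "is_quadratic_form q"
  and nondeg: "nondegenerate q"
  and q_zero: "qz_eq (q 0) 0"
  and f_add_f: "f + f = 0"
  and q_f: "qz_eq (q f) (1/2)"
  using psm_obj homogeneous_q_zero unfolding PSM_obj_def by blast+

lemma f_neq_zero: "f \<noteq> 0"
proof
  assume "f = 0"
  then have "qz_eq (1/2) (0::rat)"
    using q_f q_zero qz_eq_sym qz_eq_trans by metis
  then show False
    by (simp add: qz_eq_def)
qed

lemma assoc_bil_f_cases: "qz_eq (assoc_bil q x f) (if x \<in> G0 q f then 0 else 1/2)"
proof -
  have "qz_eq (assoc_bil q f x + assoc_bil q f x) (assoc_bil q (f + f) x)"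
    using assoc_bil_add_left[OF quadratic] qz_eq_sym by blast
  then have "qz_eq (assoc_bil q x f + assoc_bil q x f) 0"
    by (simp add: f_add_f assoc_bil_commute)
  then show ?thesis
    using qz_eq_double_zeroD unfolding G0_def by auto
qed

lemma f_in_G0: "f \<in> G0 q f"
proof -
  have "assoc_bil q f f = (q 0 + q 0) - (q f + q f)"
    unfolding assoc_bil_def f_add_f by simp
  also have "qz_eq \<dots> ((0 + 0) - (1/2 + 1/2))"
    by (intro qz_eq_diff qz_eq_add q_zero q_f)
  also have "qz_eq \<dots> 0"
    by (simp add: qz_eq_def)
  finally show ?thesis
    unfolding G0_def by simp
qed

lemma ex_notin_G0: "\<exists>a. a \<notin> G0 q f"
proof -
  obtain y where "\<not> qz_eq (assoc_bil q f y) 0"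
    using nondeg f_neq_zero unfolding nondegenerate_def by blast
  then show ?thesis
    unfolding G0_def by (auto simp: assoc_bil_commute)
qed

lemma add_in_G0_iff: "x + y \<in> G0 q f \<longleftrightarrow> (x \<in> G0 q f \<longleftrightarrow> y \<in> G0 q f)"
proof -
  define s where "s = (if x \<in> G0 q f then 0 else 1/2) + (if y \<in> G0 q f then (0::rat) else 1/2)"
  have "qz_eq (assoc_bil q (x + y) f) (assoc_bil q x f + assoc_bil q y f)"
    using assoc_bil_add_left[OF quadratic] .
  also have "qz_eq \<dots> s"
    unfolding s_def by (intro qz_eq_add assoc_bil_f_cases)
  finally have "x + y \<in> G0 q f \<longleftrightarrow> qz_eq s 0"
    unfolding G0_def by (simp add: qz_eq_left_cong)
  then show ?thesis
    unfolding s_def by (cases "x \<in> G0 q f"; cases "y \<in> G0 q f") (simp_all add: qz_eq_def)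
qed

lemma uminus_in_G0_iff: "- x \<in> G0 q f \<longleftrightarrow> x \<in> G0 q f"
  using add_in_G0_iff[of x "- x"] zero_in_G0 by auto

lemma q_add_f_eq_iff: "qz_eq (q (x + f)) (q x) \<longleftrightarrow> x \<notin> G0 q f"
proof -
  have "q (x + f) = q x + q f + assoc_bil q x f - q 0"
    by (rule q_add_eq)
  also have "qz_eq \<dots> (q x + 1/2 + (if x \<in> G0 q f then 0 else 1/2) - 0)"
    by (intro qz_eq_diff qz_eq_add qz_eq_refl q_f assoc_bil_f_cases q_zero)
  finally have "qz_eq (q (x + f)) (q x) \<longleftrightarrow>
      qz_eq (q x + 1/2 + (if x \<in> G0 q f then 0 else 1/2) - 0) (q x)"
    by (rule qz_eq_left_cong)
  then show ?thesis
    by (cases "x \<in> G0 q f") (simp_all add: qz_eq_def)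
qed

lemma orthogonal_to_G0_eq_zero:
  assumes a: "a \<notin> G0 q f" and "qz_eq (assoc_bil q e a) 0"
    and orth: "\<forall>x \<in> G0 q f. qz_eq (assoc_bil q e x) 0"
  shows "e = 0"
proof -
  have "qz_eq (assoc_bil q e y) 0" if y: "y \<notin> G0 q f" for y
  proof -
    have "y - a \<in> G0 q f"
      using add_in_G0_iff[of y "- a"] uminus_in_G0_iff a y by simp
    have "assoc_bil q e y = assoc_bil q e (a + (y - a))"
      by simp
    also have "qz_eq \<dots> (assoc_bil q e a + assoc_bil q e (y - a))"
      by (rule assoc_bil_add_right[OF quadratic])
    also have "qz_eq \<dots> (0 + 0)"
      using \<open>y - a \<in> G0 q f\<close> assms(2) orth by (intro qz_eq_add) auto
    finally show ?thesis
      by simp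
  qed
  then show ?thesis
    using orth nondeg unfolding nondegenerate_def by blast
qed

lemma orthogonal_to_G0_cases:
  assumes orth: "\<forall>x \<in> G0 q f. qz_eq (assoc_bil q e x) 0"
  shows "e = 0 \<or> e = f"
proof -
  obtain a where a: "a \<notin> G0 q f"
    using ex_notin_G0 by blast
  have "qz_eq (assoc_bil q e a + assoc_bil q e a) (assoc_bil q e (a + a))"
    using assoc_bil_add_right[OF quadratic] qz_eq_sym by blast
  also have "qz_eq \<dots> 0"
    using orth a add_in_G0_iff[of a a] by simp
  finally consider "qz_eq (assoc_bil q e a) 0" | "qz_eq (assoc_bil q e a) (1/2)"
    using qz_eq_double_zeroD by blast
  then show ?thesis
  proof cases
    case 1
    then show ?thesis
      using orthogonal_to_G0_eq_zero a orth by blast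
  next
    case 2
    have "e + f = 0"
    proof (rule orthogonal_to_G0_eq_zero[OF a])
      have "qz_eq (assoc_bil q (e + f) a) (assoc_bil q e a + assoc_bil q f a)"
        by (rule assoc_bil_add_left[OF quadratic])
      also have "qz_eq \<dots> (1/2 + 1/2)"
        using 2 assoc_bil_f_cases[of a] a by (intro qz_eq_add) (simp_all add: assoc_bil_commute)
      also have "qz_eq \<dots> 0"
        by (simp add: qz_eq_def)
      finally show "qz_eq (assoc_bil q (e + f) a) 0" .
      show "\<forall>x \<in> G0 q f. qz_eq (assoc_bil q (e + f) x) 0"
      proof
        fix x assume x: "x \<in> G0 q f"
        have "qz_eq (assoc_bil q (e + f) x) (assoc_bil q e x + assoc_bil q f x)"
          by (rule assoc_bil_add_left[OF quadratic])
        also have "qz_eq \<dots> (0 + 0)"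
          using orth x by (intro qz_eq_add) (auto simp: G0_def assoc_bil_commute)
        finally show "qz_eq (assoc_bil q (e + f) x) 0"
          by simp
      qed
    qed
    then show ?thesis
      using f_add_f by (metis add_right_cancel)
  qed
qed

lemma F_kernel_fixes_G0:
  assumes \<phi>: "\<phi> \<in> F_kernel q f" and x: "x \<in> G0 q f"
  shows "\<phi> x = x"
proof -
  have "{x, x + f} \<in> Dgrp q f"
    unfolding Dgrp_def using x by force
  then have "\<phi> ` {x, x + f} = {x, x + f}"
    using \<phi> unfolding F_kernel_def F_mor_def by (simp only: mem_Collect_eq)
  then have "\<phi> x \<in> {x, x + f}"
    by blast
  moreover have "qz_eq (q (\<phi> x)) (q x)"
    using \<phi> unfolding F_kernel_def PSM_aut_def by blast
  ultimately show ?thesis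
    using q_add_f_eq_iff[of x] x by auto
qed

lemma F_kernel_cases:
  assumes \<phi>: "\<phi> \<in> F_kernel q f"
  shows "\<phi> = id \<or> \<phi> = twist q f"
proof -
  have hom: "\<And>x y. \<phi> (x + y) = \<phi> x + \<phi> y" and q_pres: "\<And>x. qz_eq (q (\<phi> x)) (q x)"
    using \<phi> unfolding F_kernel_def PSM_aut_def by blast+
  obtain a where a: "a \<notin> G0 q f"
    using ex_notin_G0 by blast
  define d where "d = \<phi> a - a"
  have shift: "\<phi> y = y + d" if y: "y \<notin> G0 q f" for y
  proof -
    have "y - a \<in> G0 q f"
      using add_in_G0_iff[of y "- a"] uminus_in_G0_iff a y by simp
    then have "\<phi> y = \<phi> a + (y - a)"
      using hom[of a "y - a"] F_kernel_fixes_G0[OF \<phi>] by simp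
    then show ?thesis
      unfolding d_def by simp
  qed
  have "\<forall>x \<in> G0 q f. qz_eq (assoc_bil q d x) 0"
  proof
    fix x assume x: "x \<in> G0 q f"
    have "qz_eq (assoc_bil q a x + assoc_bil q d x) (assoc_bil q (a + d) x)"
      using assoc_bil_add_left[OF quadratic] qz_eq_sym by blast
    also have "assoc_bil q (a + d) x = assoc_bil q (\<phi> a) (\<phi> x)"
      using F_kernel_fixes_G0[OF \<phi> x] unfolding d_def by simp
    also have "qz_eq \<dots> (assoc_bil q a x)"
      by (rule assoc_bil_preserved) (simp_all add: hom q_pres)
    finally show "qz_eq (assoc_bil q d x) 0"
      by (simp only: qz_eq_add_self_iff)
  qed
  then consider "d = 0" | "d = f"
    using orthogonal_to_G0_cases by blast
  moreover have "\<phi> = (\<lambda>y. if y \<in> G0 q f then y else y + d)"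
    using shift F_kernel_fixes_G0[OF \<phi>] by auto
  ultimately show ?thesis
    by cases (simp_all add: twist_def fun_eq_iff)
qed

lemma twist_add: "twist q f (x + y) = twist q f x + twist q f y"
  using add_in_G0_iff[of x y] f_add_f
  by (auto simp: twist_def algebra_simps)

lemma twist_twist [simp]: "twist q f (twist q f x) = x"
  using add_in_G0_iff[of x f] f_in_G0 f_add_f
  by (auto simp: twist_def add.assoc)

lemma twist_in_F_kernel: "twist q f \<in> F_kernel q f"
proof -
  have "bij (twist q f)"
    by (rule involuntory_imp_bij) simp
  moreover have "qz_eq (q (twist q f x)) (q x)" for x
    using q_add_f_eq_iff[of x] by (simp add: twist_def)
  moreover have "twist q f ` C = C" if "C \<in> Dgrp q f" for C
    using that add_in_G0_iff f_in_G0 unfolding Dgrp_def by (auto simp: twist_def)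
  ultimately show ?thesis
    using twist_add f_in_G0 unfolding F_kernel_def PSM_aut_def F_mor_def by (simp add: twist_def)
qed

lemma twist_neq_id: "twist q f \<noteq> id"
proof
  assume "twist q f = id"
  moreover obtain a where "a \<notin> G0 q f"
    using ex_notin_G0 by blast
  ultimately have "a + f = a"
    by (metis id_apply twist_def)
  then show False
    using f_neq_zero by simp
qed

lemma F_kernel_eq: "F_kernel q f = {id, twist q f}"
  using F_kernel_cases id_in_F_kernel twist_in_F_kernel by blast

end

lemma iso_integer_mod_group_2I:
  assumes "monoid G" and carrier: "carrier G = {\<one>\<^bsub>G\<^esub>, p}"
    and "p \<noteq> \<one>\<^bsub>G\<^esub>" and "p \<otimes>\<^bsub>G\<^esub> p = \<one>\<^bsub>G\<^esub>"
  shows "G \<cong> integer_mod_group 2"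
proof -
  define h where "h x = (if x = \<one>\<^bsub>G\<^esub> then 0 else 1 :: int)" for x
  have carrier_Z2: "carrier (integer_mod_group 2) = {0, 1}"
    by (auto simp: carrier_integer_mod_group)
  have "h \<in> hom G (integer_mod_group 2)"
    unfolding hom_def using assms by (auto simp: carrier carrier_Z2 h_def)
  moreover have "bij_betw h (carrier G) (carrier (integer_mod_group 2))"
    unfolding carrier carrier_Z2 bij_betw_def using assms(3) by (auto simp: h_def)
  ultimately show ?thesis
    by (intro is_isoI isoI)
qed

theorem mainTheorem7:
  fixes q :: "'a::{ab_group_add,finite} \<Rightarrow> rat" and f :: 'a
  assumes "PSM_obj q f"
  shows "F_kernel_group q f \<cong> integer_mod_group 2"
proof -
  interpret psm_object q f
    by (rule psm_object.intro) (fact assms)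
  show ?thesis
  proof (rule iso_integer_mod_group_2I)
    show "monoid (F_kernel_group q f)"
      by (rule monoidI) (auto simp: F_kernel_group_def F_kernel_eq fun_eq_iff)
    show "carrier (F_kernel_group q f) = {\<one>\<^bsub>F_kernel_group q f\<^esub>, twist q f}"
      by (simp add: F_kernel_group_def F_kernel_eq)
    show "twist q f \<noteq> \<one>\<^bsub>F_kernel_group q f\<^esub>"
      using twist_neq_id by (simp add: F_kernel_group_def)
    show "twist q f \<otimes>\<^bsub>F_kernel_group q f\<^esub> twist q f = \<one>\<^bsub>F_kernel_group q f\<^esub>"
      by (simp add: F_kernel_group_def fun_eq_iff)
  qed
qed

end
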